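(* Let $\Omega\subset\mathbb{R}^d$ be a bounded domain, let $c_\varepsilon:\Omega\times\Omega\to\mathbb{R}$ be a bounded measurable cost function with $\|c_\varepsilon\|_\infty=\sup_{\Omega\times\Omega}|c_\varepsilon|<\infty$, let $\mu_\star,\nu_\star$ be probability measures on $\Omega$, and for each $k\ge 0$ let $\mu_{\star,k},\nu_{\star,k}$ be probability measures on $\Omega$. Define the centered Sinkhorn iterates by $\bar\varphi_0:=0$ and, for $k\ge 0$, $$\bar\psi_k(\mathbf{y}):=-\log\int_\Omega e^{\bar\varphi_k(\mathbf{x})-c_\varepsilon(\mathbf{x},\mathbf{y})}\,\mu_{\star,k}(\mathrm{d}\mathbf{x}),$$ $$\bar\varphi_{k+1}(\mathbf{x}):=-\log\int_\Omega e^{\bar\psi_k(\mathbf{y})-c_\varepsilon(\mathbf{x},\mathbf{y})}\,\nu_{\star,k}(\mathrm{d}\mathbf{y})+\lambda_k,\qquad \lambda_k:=\int_\Omega\log\Big(\int_\Omega e^{\bar\psi_k(\mathbf{y})-c_\varepsilon(\mathbf{x},\mathbf{y})}\,\nu_{\star,k}(\mathrm{d}\mathbf{y})\Big)\mu_\star(\mathrm{d}\mathbf{x}).$$ Then for every $k\ge 0$, $$\|\bar\varphi_k\|_\infty\le 2\|c_\varepsilon\|_\infty,\qquad \|\bar\psi_k\|_\infty\le 3\|c_\varepsilon\|_\infty.$$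
   Context: The constant $\lambda_k$ is a centering constant ensuring $\int_\Omega\bar\varphi_{k+1}\,\mathrm{d}\mu_\star=0$. The measures $\mu_{\star,k},\nu_{\star,k}$ play the role of approximations of the marginals $\mu_\star,\nu_\star$ available at iteration $k$. *)

theory Defs
  imports "HOL-Probability.Probability"
begin

text \<open>Centered Sinkhorn iterates.  Parameters: cost c, the approximate marginals
  mu k (= mu_{star,k}), nu k (= nu_{star,k}), and the reference marginal mus (= mu_star)
  used for the centering constant.\<close>

definition sk_psi_of ::
  "('a \<Rightarrow> 'a \<Rightarrow> real) \<Rightarrow> 'a measure \<Rightarrow> ('a \<Rightarrow> real) \<Rightarrow> 'a \<Rightarrow> real" where
  "sk_psi_of c m phi = (\<lambda>y. - ln (\<integral>x. exp (phi x - c x y) \<partial>m))"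

definition sk_lambda_of ::
  "('a \<Rightarrow> 'a \<Rightarrow> real) \<Rightarrow> 'a measure \<Rightarrow> 'a measure \<Rightarrow> ('a \<Rightarrow> real) \<Rightarrow> real" where
  "sk_lambda_of c n mus psi = (\<integral>x. ln (\<integral>y. exp (psi y - c x y) \<partial>n) \<partial>mus)"

primrec sk_phi ::
  "('a \<Rightarrow> 'a \<Rightarrow> real) \<Rightarrow> (nat \<Rightarrow> 'a measure) \<Rightarrow> (nat \<Rightarrow> 'a measure) \<Rightarrow> 'a measure
    \<Rightarrow> nat \<Rightarrow> 'a \<Rightarrow> real" where
  "sk_phi c mu nu mus 0 = (\<lambda>x. 0)"
| "sk_phi c mu nu mus (Suc k) =
     (let psi = sk_psi_of c (mu k) (sk_phi c mu nu mus k)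
      in (\<lambda>x. - ln (\<integral>y. exp (psi y - c x y) \<partial>(nu k)) + sk_lambda_of c (nu k) mus psi))"

definition sk_psi ::
  "('a \<Rightarrow> 'a \<Rightarrow> real) \<Rightarrow> (nat \<Rightarrow> 'a measure) \<Rightarrow> (nat \<Rightarrow> 'a measure) \<Rightarrow> 'a measure
    \<Rightarrow> nat \<Rightarrow> 'a \<Rightarrow> real" where
  "sk_psi c mu nu mus k = sk_psi_of c (mu k) (sk_phi c mu nu mus k)"

end

theory Submission imports Defs begin

(* Write C for the sup of |c|. Moving x changes the exponent psi(y) - c(x,y) by at most 2C, so
   L(x) = log (integral of exp (psi(y) - c(x,y)) over nu_k) oscillates by at most 2C, and its
   centred version phi_(k+1) = (integral of L over mu_star) - L is bounded by 2C, whatever the size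
   of psi. Conversely, |phi_k| <= 2C puts the exponent phi_k(x) - c(x,y) in [-3C, 3C], and hence
   psi_k = -log (integral of its exponential) as well. Measurability is carried through the
   induction because the centering integral needs L to be integrable. Neither the topology of
   Omega nor the marginal nu_star enters the argument. *)

context prob_space
begin

lemma integrable_exp_of_bounded:
  fixes f :: "'a \<Rightarrow> real"
  assumes "f \<in> borel_measurable M" and "\<And>x. x \<in> space M \<Longrightarrow> \<bar>f x\<bar> \<le> B"
  shows "integrable M (\<lambda>x. exp (f x))"
  using assms by (intro integrable_const_bound[where B = "exp B"]) (auto simp: abs_le_iff)

lemma integral_exp_bounds:
  fixes f :: "'a \<Rightarrow> real"
  assumes "f \<in> borel_measurable M" and "\<And>x. x \<in> space M \<Longrightarrow> \<bar>f x\<bar> \<le> B"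
  shows "exp (- B) \<le> (\<integral>x. exp (f x) \<partial>M)" and "(\<integral>x. exp (f x) \<partial>M) \<le> exp B"
  using assms integrable_exp_of_bounded[OF assms]
  by (auto intro!: integral_ge_const integral_le_const AE_I2 simp: abs_le_iff minus_le_iff)

lemma abs_ln_integral_exp_le:
  fixes f :: "'a \<Rightarrow> real"
  assumes "f \<in> borel_measurable M" and "\<And>x. x \<in> space M \<Longrightarrow> \<bar>f x\<bar> \<le> B"
  shows "\<bar>ln (\<integral>x. exp (f x) \<partial>M)\<bar> \<le> B"
proof -
  let ?I = "\<integral>x. exp (f x) \<partial>M"
  have "exp (- B) \<le> ?I" "?I \<le> exp B"
    using integral_exp_bounds[OF assms] by auto
  moreover have "0 < ?I"
    using \<open>exp (- B) \<le> ?I\<close> by (meson exp_gt_zero less_le_trans)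
  ultimately have "- B \<le> ln ?I" "ln ?I \<le> B"
    by (metis ln_exp ln_le_cancel_iff exp_gt_zero)+
  then show ?thesis
    by linarith
qed

lemma ln_integral_exp_le_shift:
  fixes f g :: "'a \<Rightarrow> real"
  assumes f: "f \<in> borel_measurable M" "\<And>x. x \<in> space M \<Longrightarrow> \<bar>f x\<bar> \<le> B"
    and g: "g \<in> borel_measurable M" "\<And>x. x \<in> space M \<Longrightarrow> \<bar>g x\<bar> \<le> B"
    and le: "\<And>x. x \<in> space M \<Longrightarrow> f x \<le> D + g x"
  shows "ln (\<integral>x. exp (f x) \<partial>M) \<le> D + ln (\<integral>x. exp (g x) \<partial>M)"
proof -
  have pos_f: "0 < (\<integral>x. exp (f x) \<partial>M)" and pos_g: "0 < (\<integral>x. exp (g x) \<partial>M)"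
    using integral_exp_bounds(1)[OF f] integral_exp_bounds(1)[OF g]
    by (meson exp_gt_zero less_le_trans)+
  have "(\<integral>x. exp (f x) \<partial>M) \<le> (\<integral>x. exp D * exp (g x) \<partial>M)"
    using le integrable_exp_of_bounded[OF f] integrable_exp_of_bounded[OF g]
    by (intro integral_mono integrable_mult_right) (auto simp flip: exp_add)
  also have "\<dots> = exp D * (\<integral>x. exp (g x) \<partial>M)"
    by simp
  finally have "ln (\<integral>x. exp (f x) \<partial>M) \<le> ln (exp D * (\<integral>x. exp (g x) \<partial>M))"
    using pos_f by simp
  then show ?thesis
    using pos_g by (simp add: ln_mult)
qed

lemma abs_integral_diff_le_oscillation:
  fixes L :: "'a \<Rightarrow> real"
  assumes L: "integrable M L" and osc: "\<And>x x'. x \<in> space M \<Longrightarrow> x' \<in> space M \<Longrightarrow> L x \<le> D + L x'"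
    and x: "x \<in> space M"
  shows "\<bar>(\<integral>x'. L x' \<partial>M) - L x\<bar> \<le> D"
proof -
  have "L x - D \<le> (\<integral>x'. L x' \<partial>M)"
    using osc x by (intro integral_ge_const L AE_I2) (auto simp: algebra_simps)
  moreover have "(\<integral>x'. L x' \<partial>M) \<le> L x + D"
    using osc[OF _ x] by (intro integral_le_const L AE_I2) (auto simp: add.commute)
  ultimately show ?thesis
    by linarith
qed

end

lemma (in sigma_finite_measure) borel_measurable_lebesgue_integral_sets_cong:
  fixes f :: "'b \<Rightarrow> 'a \<Rightarrow> real"
  assumes "sets M = sets M'" and "(\<lambda>(x, y). f x y) \<in> borel_measurable (N \<Otimes>\<^sub>M M')"
  shows "(\<lambda>x. \<integral>y. f x y \<partial>M) \<in> borel_measurable N"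
proof (rule borel_measurable_lebesgue_integral)
  show "(\<lambda>(x, y). f x y) \<in> borel_measurable (N \<Otimes>\<^sub>M M)"
    using assms(2) by (simp add: measurable_cong_sets[OF sets_pair_measure_cong[OF refl assms(1)] refl])
qed

definition sk_centered_update ::
  "('a \<Rightarrow> 'a \<Rightarrow> real) \<Rightarrow> 'a measure \<Rightarrow> 'a measure \<Rightarrow> ('a \<Rightarrow> real) \<Rightarrow> 'a \<Rightarrow> real" where
  "sk_centered_update c n mus psi =
     (\<lambda>x. - ln (\<integral>y. exp (psi y - c x y) \<partial>n) + sk_lambda_of c n mus psi)"

lemma sk_phi_Suc:
  "sk_phi c mu nu mus (Suc k) = sk_centered_update c (nu k) mus (sk_psi c mu nu mus k)"
  by (simp add: sk_psi_def sk_centered_update_def Let_def)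

locale bounded_cost =
  fixes M :: "'a measure" and c :: "'a \<Rightarrow> 'a \<Rightarrow> real" and C :: real
  assumes cost_measurable: "(\<lambda>(x, y). c x y) \<in> borel_measurable (M \<Otimes>\<^sub>M M)"
    and cost_bounded: "\<And>x y. x \<in> space M \<Longrightarrow> y \<in> space M \<Longrightarrow> \<bar>c x y\<bar> \<le> C"
begin

lemma sk_psi_of_bounded:
  assumes m: "prob_space m" "sets m = sets M"
    and phi: "phi \<in> borel_measurable M" and phi_bound: "\<And>x. x \<in> space M \<Longrightarrow> \<bar>phi x\<bar> \<le> A"
  shows "sk_psi_of c m phi \<in> borel_measurable M"
    and "y \<in> space M \<Longrightarrow> \<bar>sk_psi_of c m phi y\<bar> \<le> A + C"
proof -
  interpret prob_space m by fact
  note [measurable] = cost_measurable phi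
  have g: "(\<lambda>(y, x). phi x - c x y) \<in> borel_measurable (M \<Otimes>\<^sub>M M)"
    using measurable_pair_swap[OF cost_measurable] by measurable
  then have "(\<lambda>(y, x). exp (phi x - c x y)) \<in> borel_measurable (M \<Otimes>\<^sub>M M)"
    by measurable
  from borel_measurable_lebesgue_integral_sets_cong[OF m(2) this]
  show "sk_psi_of c m phi \<in> borel_measurable M"
    unfolding sk_psi_of_def by measurable
  assume y: "y \<in> space M"
  have "(\<lambda>x. phi x - c x y) \<in> borel_measurable m"
    using measurable_Pair2[OF g y] by (simp add: measurable_cong_sets[OF m(2) refl])
  moreover have "\<bar>phi x - c x y\<bar> \<le> A + C" if "x \<in> space m" for x
  proof -
    have "\<bar>phi x\<bar> \<le> A" "\<bar>c x y\<bar> \<le> C"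
      using that y phi_bound cost_bounded sets_eq_imp_space_eq[OF m(2)] by auto
    then show ?thesis
      by linarith
  qed
  ultimately show "\<bar>sk_psi_of c m phi y\<bar> \<le> A + C"
    unfolding sk_psi_of_def using abs_ln_integral_exp_le by simp
qed

lemma sk_centered_update_bounded:
  assumes n: "prob_space n" "sets n = sets M"
    and mus: "prob_space mus" "sets mus = sets M"
    and psi: "psi \<in> borel_measurable M" and psi_bound: "\<And>y. y \<in> space M \<Longrightarrow> \<bar>psi y\<bar> \<le> B"
  shows "sk_centered_update c n mus psi \<in> borel_measurable M"
    and "x \<in> space M \<Longrightarrow> \<bar>sk_centered_update c n mus psi x\<bar> \<le> 2 * C"
proof -
  interpret n: prob_space n by fact
  interpret mus: prob_space mus by fact
  note [measurable] = cost_measurable psi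
  define L where "L x = ln (\<integral>y. exp (psi y - c x y) \<partial>n)" for x
  have update: "sk_centered_update c n mus psi = (\<lambda>x. (\<integral>x'. L x' \<partial>mus) - L x)"
    by (simp add: sk_centered_update_def sk_lambda_of_def L_def)
  have g: "(\<lambda>(x, y). psi y - c x y) \<in> borel_measurable (M \<Otimes>\<^sub>M M)"
    by measurable
  then have "(\<lambda>(x, y). exp (psi y - c x y)) \<in> borel_measurable (M \<Otimes>\<^sub>M M)"
    by measurable
  from n.borel_measurable_lebesgue_integral_sets_cong[OF n(2) this]
  have L_measurable: "L \<in> borel_measurable M"
    unfolding L_def by measurable
  then show "sk_centered_update c n mus psi \<in> borel_measurable M"
    unfolding update by measurable
  have section_measurable: "(\<lambda>y. psi y - c x y) \<in> borel_measurable n" if "x \<in> space M" for x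
    using measurable_Pair2[OF g that] by (simp add: measurable_cong_sets[OF n(2) refl])
  have section_bound: "\<bar>psi y - c x y\<bar> \<le> B + C" if "x \<in> space M" "y \<in> space n" for x y
  proof -
    have "\<bar>psi y\<bar> \<le> B" "\<bar>c x y\<bar> \<le> C"
      using that psi_bound cost_bounded sets_eq_imp_space_eq[OF n(2)] by auto
    then show ?thesis
      by linarith
  qed
  have "integrable mus L"
  proof (rule mus.integrable_const_bound[where B = "B + C"])
    show "AE x in mus. norm (L x) \<le> B + C"
      using n.abs_ln_integral_exp_le[OF section_measurable section_bound]
      by (auto simp: L_def sets_eq_imp_space_eq[OF mus(2)])
    show "L \<in> borel_measurable mus"
      using L_measurable by (simp add: measurable_cong_sets[OF mus(2) refl])
  qed
  moreover have "L x \<le> 2 * C + L x'" if "x \<in> space mus" "x' \<in> space mus" for x x'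
    unfolding L_def
  proof (rule n.ln_integral_exp_le_shift)
    have x: "x \<in> space M" and x': "x' \<in> space M"
      using that sets_eq_imp_space_eq[OF mus(2)] by auto
    show "(\<lambda>y. psi y - c x y) \<in> borel_measurable n" "(\<lambda>y. psi y - c x' y) \<in> borel_measurable n"
      using section_measurable x x' by auto
    show "\<bar>psi y - c x y\<bar> \<le> B + C" "\<bar>psi y - c x' y\<bar> \<le> B + C" if "y \<in> space n" for y
      using section_bound x x' that by auto
    show "psi y - c x y \<le> 2 * C + (psi y - c x' y)" if "y \<in> space n" for y
    proof -
      have "\<bar>c x y\<bar> \<le> C" "\<bar>c x' y\<bar> \<le> C"
        using x x' that cost_bounded sets_eq_imp_space_eq[OF n(2)] by auto
      then show ?thesis
        by linarith
    qed
  qed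
  ultimately show "\<bar>sk_centered_update c n mus psi x\<bar> \<le> 2 * C" if "x \<in> space M"
    using mus.abs_integral_diff_le_oscillation that sets_eq_imp_space_eq[OF mus(2)]
    by (simp add: update)
qed

lemma sk_phi_bounded:
  assumes mus: "prob_space mus" "sets mus = sets M"
    and mu: "\<And>k. prob_space (mu k)" "\<And>k. sets (mu k) = sets M"
    and nu: "\<And>k. prob_space (nu k)" "\<And>k. sets (nu k) = sets M"
  shows "sk_phi c mu nu mus k \<in> borel_measurable M \<and>
    (\<forall>x\<in>space M. \<bar>sk_phi c mu nu mus k x\<bar> \<le> 2 * C)"
proof (induction k)
  case 0
  have "0 \<le> C" if "x \<in> space M" for x
    using cost_bounded[OF that that] by linarith
  then show ?case
    by auto
next
  case (Suc k)
  then have "sk_phi c mu nu mus k \<in> borel_measurable M"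
    and "\<And>x. x \<in> space M \<Longrightarrow> \<bar>sk_phi c mu nu mus k x\<bar> \<le> 2 * C"
    by auto
  then have "sk_psi c mu nu mus k \<in> borel_measurable M"
    and "\<And>y. y \<in> space M \<Longrightarrow> \<bar>sk_psi c mu nu mus k y\<bar> \<le> 2 * C + C"
    unfolding sk_psi_def using sk_psi_of_bounded[OF mu(1,2)] by blast+
  then show ?case
    unfolding sk_phi_Suc using sk_centered_update_bounded[OF nu(1,2) mus] by blast
qed

lemma sk_psi_bounded:
  assumes mus: "prob_space mus" "sets mus = sets M"
    and mu: "\<And>k. prob_space (mu k)" "\<And>k. sets (mu k) = sets M"
    and nu: "\<And>k. prob_space (nu k)" "\<And>k. sets (nu k) = sets M"
    and y: "y \<in> space M"
  shows "\<bar>sk_psi c mu nu mus k y\<bar> \<le> 3 * C"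
proof -
  have "sk_phi c mu nu mus k \<in> borel_measurable M"
    and "\<And>x. x \<in> space M \<Longrightarrow> \<bar>sk_phi c mu nu mus k x\<bar> \<le> 2 * C"
    using sk_phi_bounded[OF mus mu nu] by auto
  from sk_psi_of_bounded(2)[OF mu(1,2) this y] show ?thesis
    by (simp add: sk_psi_def)
qed

end

theorem mainTheorem1:
  fixes \<Omega> :: "'a::euclidean_space set"
    and c :: "'a \<Rightarrow> 'a \<Rightarrow> real"
    and mus nus :: "'a measure"
    and mu nu :: "nat \<Rightarrow> 'a measure"
  assumes "open \<Omega>" and "connected \<Omega>" and "bounded \<Omega>"
    and "(\<lambda>(x, y). c x y) \<in> borel_measurable (restrict_space borel \<Omega> \<Otimes>\<^sub>M restrict_space borel \<Omega>)"
    and "bounded ((\<lambda>(x, y). c x y) ` (\<Omega> \<times> \<Omega>))"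
    and "prob_space mus" and "sets mus = sets (restrict_space borel \<Omega>)"
    and "prob_space nus" and "sets nus = sets (restrict_space borel \<Omega>)"
    and "\<And>k. prob_space (mu k)" and "\<And>k. sets (mu k) = sets (restrict_space borel \<Omega>)"
    and "\<And>k. prob_space (nu k)" and "\<And>k. sets (nu k) = sets (restrict_space borel \<Omega>)"
  shows "\<forall>k. (\<forall>x\<in>\<Omega>. \<bar>sk_phi c mu nu mus k x\<bar> \<le> 2 * (SUP p\<in>\<Omega> \<times> \<Omega>. \<bar>c (fst p) (snd p)\<bar>))
           \<and> (\<forall>y\<in>\<Omega>. \<bar>sk_psi c mu nu mus k y\<bar> \<le> 3 * (SUP p\<in>\<Omega> \<times> \<Omega>. \<bar>c (fst p) (snd p)\<bar>))"
proof -
  let ?C = "SUP p\<in>\<Omega> \<times> \<Omega>. \<bar>c (fst p) (snd p)\<bar>"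
  have bdd: "bdd_above ((\<lambda>p. \<bar>c (fst p) (snd p)\<bar>) ` (\<Omega> \<times> \<Omega>))"
    using assms(5) by (force simp: bounded_iff bdd_above_def)
  have "\<bar>c x y\<bar> \<le> ?C" if "x \<in> \<Omega>" "y \<in> \<Omega>" for x y
    using cSUP_upper[OF _ bdd, of "(x, y)"] that by simp
  then have "bounded_cost (restrict_space borel \<Omega>) c ?C"
    using assms(4) by unfold_locales (auto simp: space_restrict_space)
  then show ?thesis
    using bounded_cost.sk_phi_bounded[OF _ assms(6,7,10,11,12,13)]
      bounded_cost.sk_psi_bounded[OF _ assms(6,7,10,11,12,13)]
    by (auto simp: space_restrict_space)
qed

end
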